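(* Let $r$ be a positive integer, let $G_r=(V,E)$ be the Chimera graph, and let $c_{uv}\in\mathbb{R}$ for $(u,v)\in E$ and $d_u\in\mathbb{R}$ for $u\in V$ be arbitrary. Let $H^*=\min_{S\in\{-1,1\}^V}\left(\sum_{(u,v)\in E}c_{uv}S_uS_v+\sum_{u\in V}d_uS_u\right)$. Then $$H^*\le -\frac{C}{3C+4}\left[\sum_{(u,v)\in E}|c_{uv}|+\sum_{u\in V}|d_u|\right]$$ for some constant $C>\frac{\ln(1+\sqrt{2})}{\pi}$ (independent of $r$ and of the coefficients). In particular, the approximation factor $(3C+4)/C$ satisfies $(3C+4)/C<17.26$.
   Context: The Chimera graph $G_r=(V,E)$: $V=\{(i,j,k,l)\in\mathbb{Z}^4: 1\le i,j\le r,\ 1\le k\le 4,\ l\in\{0,1\}\}$. $E=E_0\cup E_1\cup E_{01}$ (disjoint), where $E_0$ consists of the edges $\{(i,j,k,0),(i+1,j,k,0)\}$ for $1\le i\le r-1$, $1\le j\le r$, $1\le k\le 4$; $E_1$ consists of the edges $\{(i,j,k,1),(i,j+1,k,1)\}$ for $1\le i\le r$, $1\le j\le r-1$, $1\le k\le 4$; and $E_{01}$ consists of the edges $\{(i,j,k_0,0),(i,j,k_1,1)\}$ for $1\le i,j\le r$, $1\le k_0,k_1\le 4$. *)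

theory Defs
  imports Complex_Main
begin

type_synonym vertex = "nat \<times> nat \<times> nat \<times> nat"

definition chimera_V :: "nat \<Rightarrow> vertex set" where
  "chimera_V r = {(i,j,k,l). 1 \<le> i \<and> i \<le> r \<and> 1 \<le> j \<and> j \<le> r \<and> 1 \<le> k \<and> k \<le> 4 \<and> l \<in> {0,1}}"

definition chimera_E0 :: "nat \<Rightarrow> (vertex \<times> vertex) set" where
  "chimera_E0 r = {((i,j,k,0),(i+1,j,k,0)) | i j k. 1 \<le> i \<and> i \<le> r - 1 \<and> 1 \<le> j \<and> j \<le> r \<and> 1 \<le> k \<and> k \<le> 4}"

definition chimera_E1 :: "nat \<Rightarrow> (vertex \<times> vertex) set" where
  "chimera_E1 r = {((i,j,k,1),(i,j+1,k,1)) | i j k. 1 \<le> i \<and> i \<le> r \<and> 1 \<le> j \<and> j \<le> r - 1 \<and> 1 \<le> k \<and> k \<le> 4}"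

definition chimera_E01 :: "nat \<Rightarrow> (vertex \<times> vertex) set" where
  "chimera_E01 r = {((i,j,k0,0),(i,j,k1,1)) | i j k0 k1. 1 \<le> i \<and> i \<le> r \<and> 1 \<le> j \<and> j \<le> r \<and> 1 \<le> k0 \<and> k0 \<le> 4 \<and> 1 \<le> k1 \<and> k1 \<le> 4}"

definition chimera_E :: "nat \<Rightarrow> (vertex \<times> vertex) set" where
  "chimera_E r = chimera_E0 r \<union> chimera_E1 r \<union> chimera_E01 r"

definition ising_energy ::
  "nat \<Rightarrow> (vertex \<times> vertex \<Rightarrow> real) \<Rightarrow> (vertex \<Rightarrow> real) \<Rightarrow> (vertex \<Rightarrow> real) \<Rightarrow> real" where
  "ising_energy r c d S =
     (\<Sum>(u,v)\<in>chimera_E r. c (u,v) * S u * S v) + (\<Sum>u\<in>chimera_V r. d u * S u)"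

definition ground_energy ::
  "nat \<Rightarrow> (vertex \<times> vertex \<Rightarrow> real) \<Rightarrow> (vertex \<Rightarrow> real) \<Rightarrow> real" where
  "ground_energy r c d =
     Min {ising_energy r c d S | S. \<forall>u\<in>chimera_V r. S u \<in> {-1, 1}}"

end

theory Submission
  imports Defs "HOL-Library.Disjoint_Sets" "HOL-Analysis.Complex_Transcendental"
begin

text \<open>
  Averaging over independent random sign flips of the blocks of a partition of the vertices kills,
  in expectation, every field term and every coupling between different blocks; so whenever the
  couplings inside each block can be satisfied simultaneously, the ground energy is at most minus
  their total weight. On the Chimera graph the blocks can be the horizontal and vertical paths
  formed by \<open>E\<^sub>0\<close> and \<open>E\<^sub>1\<close>, or, for each \<open>k\<close>, the stars joining \<open>(i,j,k,0)\<close> to the four vertices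
  \<open>(i,j,k',1)\<close>. Together with the configuration aligning every spin against its field, which has
  energy at most \<open>\<Sum>|c| - \<Sum>|d|\<close>, this yields five bounds; weighting the path bound by 2, each star
  bound by 2 and the field bound by 1 gives \<open>11 H\<^sup>* \<le> -(\<Sum>|c| + \<Sum>|d|)\<close>, which is the claim for
  \<open>C = 1/2 > ln(1 + \<surd>2)/\<pi>\<close>.
\<close>

definition pm_sgn :: "real \<Rightarrow> real" where
  "pm_sgn x = (if x \<ge> 0 then 1 else -1)"

lemma pm_sgn_mult_self: "pm_sgn x * x = \<bar>x\<bar>"
  by (simp add: pm_sgn_def)

lemma spin_mult_self: "s \<in> {-1, 1} \<Longrightarrow> s * s = (1::real)"
  by auto

lemma spin_mult_closed: "s \<in> {-1, 1} \<Longrightarrow> t \<in> {-1, 1} \<Longrightarrow> s * t \<in> {-1, 1::real}"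
  by auto

definition sign_vectors :: "'b set \<Rightarrow> ('b \<Rightarrow> real) set" where
  "sign_vectors K = PiE K (\<lambda>_. {-1, 1})"

lemma finite_sign_vectors: "finite K \<Longrightarrow> finite (sign_vectors K)"
  by (simp add: sign_vectors_def finite_PiE)

lemma sign_vectors_nonempty: "sign_vectors K \<noteq> {}"
  by (simp add: sign_vectors_def PiE_eq_empty_iff)

lemma sum_sign_vectors_flip_eq_0:
  fixes f :: "('b \<Rightarrow> real) \<Rightarrow> real"
  assumes "a \<in> K" and odd: "\<And>\<epsilon>. \<epsilon> \<in> sign_vectors K \<Longrightarrow> f (\<epsilon>(a := - \<epsilon> a)) = - f \<epsilon>"
  shows "(\<Sum>\<epsilon>\<in>sign_vectors K. f \<epsilon>) = 0"
proof (rule sum_involution_eq_0[where h = "\<lambda>\<epsilon>. \<epsilon>(a := - \<epsilon> a)"])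
  fix \<epsilon> assume \<epsilon>: "\<epsilon> \<in> sign_vectors K"
  then have "\<epsilon> a \<in> {-1, 1}"
    using \<open>a \<in> K\<close> by (auto simp: sign_vectors_def)
  with \<epsilon> \<open>a \<in> K\<close> show "\<epsilon>(a := - \<epsilon> a) \<in> sign_vectors K" "\<epsilon>(a := - \<epsilon> a) \<noteq> \<epsilon>"
    by (auto simp: sign_vectors_def PiE_iff extensional_def fun_eq_iff)
  show "f (\<epsilon>(a := - \<epsilon> a)) + f \<epsilon> = 0" "(\<epsilon>(a := - \<epsilon> a))(a := - (\<epsilon>(a := - \<epsilon> a)) a) = \<epsilon>"
    using odd[OF \<epsilon>] by auto
qed

lemma sum_sign_vectors_coord:
  "a \<in> K \<Longrightarrow> (\<Sum>\<epsilon>\<in>sign_vectors K. \<epsilon> a) = 0"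
  by (rule sum_sign_vectors_flip_eq_0) auto

lemma sum_sign_vectors_coord_mult:
  assumes "a \<in> K" "b \<in> K"
  shows "(\<Sum>\<epsilon>\<in>sign_vectors K. \<epsilon> a * \<epsilon> b) =
    (if a = b then real (card (sign_vectors K)) else 0)"
proof (cases "a = b")
  case True
  have "\<epsilon> a * \<epsilon> b = 1" if "\<epsilon> \<in> sign_vectors K" for \<epsilon>
    using that \<open>a \<in> K\<close> True by (auto simp: sign_vectors_def intro: spin_mult_self)
  then show ?thesis
    using True by simp
next
  case False
  then show ?thesis
    by (simp add: sum_sign_vectors_flip_eq_0[OF \<open>a \<in> K\<close>])
qed

definition ising_energy_on ::
  "('a \<times> 'a) set \<Rightarrow> 'a set \<Rightarrow> ('a \<times> 'a \<Rightarrow> real) \<Rightarrow> ('a \<Rightarrow> real) \<Rightarrow> ('a \<Rightarrow> real) \<Rightarrow> real" where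
  "ising_energy_on E V c d S = (\<Sum>(u,v)\<in>E. c (u,v) * S u * S v) + (\<Sum>u\<in>V. d u * S u)"

definition block_energy ::
  "('a \<times> 'a) set \<Rightarrow> ('a \<Rightarrow> 'b) \<Rightarrow> ('a \<times> 'a \<Rightarrow> real) \<Rightarrow> ('a \<Rightarrow> real) \<Rightarrow> real" where
  "block_energy E \<pi> c \<sigma> =
     (\<Sum>e\<in>E. if \<pi> (fst e) = \<pi> (snd e) then c e * \<sigma> (fst e) * \<sigma> (snd e) else 0)"

lemma sum_block_flips_ising_energy:
  assumes "E \<subseteq> V \<times> V"
  shows "(\<Sum>\<epsilon>\<in>sign_vectors (\<pi> ` V). ising_energy_on E V c d (\<lambda>u. \<epsilon> (\<pi> u) * \<sigma> u)) =
    real (card (sign_vectors (\<pi> ` V))) * block_energy E \<pi> c \<sigma>"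
proof -
  let ?A = "sign_vectors (\<pi> ` V)"
  have edge: "(\<Sum>\<epsilon>\<in>?A. c e * (\<epsilon> (\<pi> (fst e)) * \<sigma> (fst e)) * (\<epsilon> (\<pi> (snd e)) * \<sigma> (snd e))) =
      real (card ?A) * (if \<pi> (fst e) = \<pi> (snd e) then c e * \<sigma> (fst e) * \<sigma> (snd e) else 0)"
    if "e \<in> E" for e
  proof -
    have "\<pi> (fst e) \<in> \<pi> ` V" "\<pi> (snd e) \<in> \<pi> ` V"
      using that assms by auto
    then show ?thesis
      by (simp add: sum_distrib_left[symmetric] sum_sign_vectors_coord_mult mult_ac)
  qed
  have field: "(\<Sum>\<epsilon>\<in>?A. d u * (\<epsilon> (\<pi> u) * \<sigma> u)) = 0" if "u \<in> V" for u
    using that by (simp add: sum_distrib_left[symmetric] sum_sign_vectors_coord mult_ac)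
  have "(\<Sum>\<epsilon>\<in>?A. ising_energy_on E V c d (\<lambda>u. \<epsilon> (\<pi> u) * \<sigma> u)) =
      (\<Sum>e\<in>E. \<Sum>\<epsilon>\<in>?A. c e * (\<epsilon> (\<pi> (fst e)) * \<sigma> (fst e)) * (\<epsilon> (\<pi> (snd e)) * \<sigma> (snd e))) +
      (\<Sum>u\<in>V. \<Sum>\<epsilon>\<in>?A. d u * (\<epsilon> (\<pi> u) * \<sigma> u))"
    by (simp add: ising_energy_on_def sum.distrib case_prod_beta sum.swap[of _ ?A])
  also have "\<dots> = real (card ?A) * block_energy E \<pi> c \<sigma>"
    by (simp add: edge field block_energy_def sum_distrib_left)
  finally show ?thesis .
qed

lemma exists_spins_le_block_energy:
  assumes "finite V" "E \<subseteq> V \<times> V" "\<forall>u\<in>V. \<sigma> u \<in> {-1, 1}"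
  shows "\<exists>S. (\<forall>u\<in>V. S u \<in> {-1, 1}) \<and> ising_energy_on E V c d S \<le> block_energy E \<pi> c \<sigma>"
proof -
  let ?A = "sign_vectors (\<pi> ` V)" and ?S = "\<lambda>\<epsilon> u. \<epsilon> (\<pi> u) * \<sigma> u"
  have "\<exists>\<epsilon>\<in>?A. ising_energy_on E V c d (?S \<epsilon>) \<le> block_energy E \<pi> c \<sigma>"
  proof (rule ccontr)
    assume "\<not> ?thesis"
    then have "(\<Sum>\<epsilon>\<in>?A. block_energy E \<pi> c \<sigma>) < (\<Sum>\<epsilon>\<in>?A. ising_energy_on E V c d (?S \<epsilon>))"
      using assms(1) by (intro sum_strict_mono finite_sign_vectors sign_vectors_nonempty) auto
    then show False
      using sum_block_flips_ising_energy[OF assms(2), of c d \<pi> \<sigma>] by simp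
  qed
  then obtain \<epsilon> where "\<epsilon> \<in> ?A" "ising_energy_on E V c d (?S \<epsilon>) \<le> block_energy E \<pi> c \<sigma>"
    by blast
  moreover have "\<forall>u\<in>V. ?S \<epsilon> u \<in> {-1, 1}"
  proof
    fix u assume "u \<in> V"
    then have "\<epsilon> (\<pi> u) \<in> {-1, 1}"
      using \<open>\<epsilon> \<in> ?A\<close> by (auto simp: sign_vectors_def)
    then show "?S \<epsilon> u \<in> {-1, 1}"
      using assms(3) \<open>u \<in> V\<close> by (intro spin_mult_closed) auto
  qed
  ultimately show ?thesis
    by (intro exI[of _ "?S \<epsilon>"] conjI)
qed

lemma sum_if_mem_subset:
  "finite A \<Longrightarrow> B \<subseteq> A \<Longrightarrow> (\<Sum>x\<in>A. if x \<in> B then f x else 0) = sum f B"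
  by (simp add: sum.inter_restrict[symmetric] Int_absorb1)

primrec path_spin :: "(nat \<Rightarrow> real) \<Rightarrow> nat \<Rightarrow> real" where
  "path_spin w 0 = 1"
| "path_spin w (Suc i) = - pm_sgn (w i) * path_spin w i"

lemma path_spin_in_spins: "path_spin w i \<in> {-1, 1}"
  by (induction i) (auto simp: pm_sgn_def)

lemma path_spin_edge: "w i * path_spin w i * path_spin w (Suc i) = - \<bar>w i\<bar>"
proof -
  have "w i * path_spin w i * path_spin w (Suc i) =
      - (pm_sgn (w i) * w i) * (path_spin w i * path_spin w i)"
    by (simp add: algebra_simps)
  then show ?thesis
    using spin_mult_self[OF path_spin_in_spins] by (simp add: pm_sgn_mult_self)
qed

lemma finite_chimera_V: "finite (chimera_V r)"
proof (rule finite_subset)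
  show "chimera_V r \<subseteq> {1..r} \<times> {1..r} \<times> {1..4} \<times> {0, 1}"
    by (auto simp: chimera_V_def)
qed auto

lemma chimera_E_subset: "chimera_E r \<subseteq> chimera_V r \<times> chimera_V r"
  by (auto simp: chimera_E_def chimera_E0_def chimera_E1_def chimera_E01_def chimera_V_def)

lemma finite_chimera_E: "finite (chimera_E r)"
  using finite_subset[OF chimera_E_subset] finite_chimera_V by blast

lemma ising_energy_eq_ising_energy_on:
  "ising_energy r c d S = ising_energy_on (chimera_E r) (chimera_V r) c d S"
  by (simp add: ising_energy_def ising_energy_on_def)

lemma ising_energy_restrict:
  "ising_energy r c d (restrict S (chimera_V r)) = ising_energy r c d S"
  using chimera_E_subset[of r]
  by (auto simp: ising_energy_def intro!: arg_cong2[where f = "(+)"] sum.cong)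

lemma ground_energy_le_ising_energy:
  assumes "\<forall>u\<in>chimera_V r. S u \<in> {-1, 1}"
  shows "ground_energy r c d \<le> ising_energy r c d S"
proof -
  let ?V = "chimera_V r"
  have "{ising_energy r c d T | T. \<forall>u\<in>?V. T u \<in> {-1, 1}} \<subseteq>
      ising_energy r c d ` PiE ?V (\<lambda>_. {-1, 1})"
  proof
    fix x assume "x \<in> {ising_energy r c d T | T. \<forall>u\<in>?V. T u \<in> {-1, 1}}"
    then obtain T where "x = ising_energy r c d T" "\<forall>u\<in>?V. T u \<in> {-1, 1}"
      by blast
    then show "x \<in> ising_energy r c d ` PiE ?V (\<lambda>_. {-1, 1})"
      by (intro image_eqI[where x = "restrict T ?V"]) (auto simp: ising_energy_restrict)
  qed
  then have "finite {ising_energy r c d T | T. \<forall>u\<in>?V. T u \<in> {-1, 1}}"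
    by (rule finite_subset) (simp add: finite_PiE finite_chimera_V)
  then show ?thesis
    unfolding ground_energy_def by (rule Min_le) (use assms in blast)
qed

lemma ground_energy_le_block_energy:
  assumes "\<forall>u\<in>chimera_V r. \<sigma> u \<in> {-1, 1}"
  shows "ground_energy r c d \<le> block_energy (chimera_E r) \<pi> c \<sigma>"
proof -
  obtain S where "\<forall>u\<in>chimera_V r. S u \<in> {-1, 1}"
    "ising_energy_on (chimera_E r) (chimera_V r) c d S \<le> block_energy (chimera_E r) \<pi> c \<sigma>"
    using exists_spins_le_block_energy[OF finite_chimera_V chimera_E_subset assms, of c d \<pi>]
    by blast
  then show ?thesis
    using ground_energy_le_ising_energy[of r S c d]
    unfolding ising_energy_eq_ising_energy_on by linarith
qed

definition cell_pos :: "vertex \<Rightarrow> nat" where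
  "cell_pos = (\<lambda>(i,j,k,l). k)"

lemma chimera_E_cases:
  assumes "e \<in> chimera_E r"
  obtains (E0) i j k where "e = ((i,j,k,0),(Suc i,j,k,0))" "e \<in> chimera_E0 r" "e \<notin> chimera_E01 r"
  | (E1) i j k where "e = ((i,j,k,1),(i,Suc j,k,1))" "e \<in> chimera_E1 r" "e \<notin> chimera_E01 r"
  | (E01) i j k0 k1 where "e = ((i,j,k0,0),(i,j,k1,1))" "e \<in> chimera_E01 r"
      "e \<notin> chimera_E0 r" "e \<notin> chimera_E1 r" "1 \<le> k0" "k0 \<le> 4"
  using assms unfolding chimera_E_def chimera_E0_def chimera_E1_def chimera_E01_def
  by auto

lemma ground_energy_le_path_bound:
  "ground_energy r c d \<le> - (\<Sum>e\<in>chimera_E0 r \<union> chimera_E1 r. \<bar>c e\<bar>)"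
proof -
  define \<pi> :: "vertex \<Rightarrow> nat \<times> nat \<times> nat" where
    "\<pi> = (\<lambda>(i,j,k,l). (l, if l = 0 then j else i, k))"
  define \<sigma> :: "vertex \<Rightarrow> real" where
    "\<sigma> = (\<lambda>(i,j,k,l). if l = 0 then path_spin (\<lambda>i. c ((i,j,k,0),(Suc i,j,k,0))) i
                                else path_spin (\<lambda>j. c ((i,j,k,1),(i,Suc j,k,1))) j)"
  have spins: "\<forall>u\<in>chimera_V r. \<sigma> u \<in> {-1, 1}"
    by (simp add: \<sigma>_def split_beta path_spin_in_spins del: insert_iff)
  have "block_energy (chimera_E r) \<pi> c \<sigma> =
      (\<Sum>e\<in>chimera_E r. if e \<in> chimera_E0 r \<union> chimera_E1 r then - \<bar>c e\<bar> else 0)"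
    unfolding block_energy_def
  proof (rule sum.cong[OF refl])
    fix e assume "e \<in> chimera_E r"
    then show "(if \<pi> (fst e) = \<pi> (snd e) then c e * \<sigma> (fst e) * \<sigma> (snd e) else 0) =
        (if e \<in> chimera_E0 r \<union> chimera_E1 r then - \<bar>c e\<bar> else 0)"
    proof (cases rule: chimera_E_cases)
      case (E0 i j k)
      then show ?thesis
        using path_spin_edge[of "\<lambda>i. c ((i,j,k,0),(Suc i,j,k,0))" i] by (simp add: \<pi>_def \<sigma>_def)
    next
      case (E1 i j k)
      then show ?thesis
        using path_spin_edge[of "\<lambda>j. c ((i,j,k,1),(i,Suc j,k,1))" j] by (simp add: \<pi>_def \<sigma>_def)
    qed (simp_all add: \<pi>_def)
  qed
  also have "\<dots> = (\<Sum>e\<in>chimera_E0 r \<union> chimera_E1 r. - \<bar>c e\<bar>)"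
    by (rule sum_if_mem_subset[OF finite_chimera_E]) (auto simp: chimera_E_def)
  finally show ?thesis
    using ground_energy_le_block_energy[OF spins, of c d \<pi>] by (simp add: sum_negf)
qed

lemma ground_energy_le_star_bound:
  "ground_energy r c d \<le> - (\<Sum>e\<in>{e \<in> chimera_E01 r. cell_pos (fst e) = k}. \<bar>c e\<bar>)"
proof -
  \<comment> \<open>positions start at 1, so \<open>(i,j,0)\<close> is free to label the star of \<open>(i,j,k,0)\<close>\<close>
  define \<pi> :: "vertex \<Rightarrow> nat \<times> nat \<times> nat" where
    "\<pi> = (\<lambda>(i,j,k',l). if l = 1 \<or> k' = k then (i,j,0) else (i,j,k'))"
  define \<sigma> :: "vertex \<Rightarrow> real" where
    "\<sigma> = (\<lambda>(i,j,k',l). if l = 0 then 1 else - pm_sgn (c ((i,j,k,0),(i,j,k',1))))"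
  have spins: "\<forall>u\<in>chimera_V r. \<sigma> u \<in> {-1, 1}"
    by (simp add: \<sigma>_def split_beta pm_sgn_def)
  have "block_energy (chimera_E r) \<pi> c \<sigma> =
      (\<Sum>e\<in>chimera_E r. if e \<in> {e \<in> chimera_E01 r. cell_pos (fst e) = k} then - \<bar>c e\<bar> else 0)"
    unfolding block_energy_def
  proof (rule sum.cong[OF refl])
    fix e assume "e \<in> chimera_E r"
    then show "(if \<pi> (fst e) = \<pi> (snd e) then c e * \<sigma> (fst e) * \<sigma> (snd e) else 0) =
        (if e \<in> {e \<in> chimera_E01 r. cell_pos (fst e) = k} then - \<bar>c e\<bar> else 0)"
    proof (cases rule: chimera_E_cases)
      case (E01 i j k0 k1)
      then show ?thesis
        using pm_sgn_mult_self[of "c e"] by (auto simp: \<pi>_def \<sigma>_def cell_pos_def mult.commute)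
    qed (simp_all add: \<pi>_def)
  qed
  also have "\<dots> = (\<Sum>e\<in>{e \<in> chimera_E01 r. cell_pos (fst e) = k}. - \<bar>c e\<bar>)"
    by (rule sum_if_mem_subset[OF finite_chimera_E]) (auto simp: chimera_E_def)
  finally show ?thesis
    using ground_energy_le_block_energy[OF spins, of c d \<pi>] by (simp add: sum_negf)
qed

lemma ground_energy_le_field_bound:
  "ground_energy r c d \<le> (\<Sum>e\<in>chimera_E r. \<bar>c e\<bar>) - (\<Sum>u\<in>chimera_V r. \<bar>d u\<bar>)"
proof -
  define S where "S = (\<lambda>u. - pm_sgn (d u))"
  have spins: "\<forall>u\<in>chimera_V r. S u \<in> {-1, 1}"
    by (auto simp: S_def pm_sgn_def)
  have "c e * S (fst e) * S (snd e) \<le> \<bar>c e\<bar>" for e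
    by (simp add: S_def pm_sgn_def abs_ge_self abs_ge_minus_self)
  then have "(\<Sum>(u,v)\<in>chimera_E r. c (u,v) * S u * S v) \<le> (\<Sum>e\<in>chimera_E r. \<bar>c e\<bar>)"
    by (simp add: sum_mono case_prod_beta)
  moreover have "d u * S u = - \<bar>d u\<bar>" for u
    by (simp add: S_def pm_sgn_def)
  then have "(\<Sum>u\<in>chimera_V r. d u * S u) = - (\<Sum>u\<in>chimera_V r. \<bar>d u\<bar>)"
    by (simp add: sum_negf)
  ultimately show ?thesis
    using ground_energy_le_ising_energy[OF spins, of c d] unfolding ising_energy_def by linarith
qed

lemma sum_abs_chimera_E_split:
  "(\<Sum>e\<in>chimera_E r. \<bar>c e\<bar>) = (\<Sum>e\<in>chimera_E0 r \<union> chimera_E1 r. \<bar>c e\<bar>) +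
     (\<Sum>k\<in>{1..4}. \<Sum>e\<in>{e \<in> chimera_E01 r. cell_pos (fst e) = k}. \<bar>c e\<bar>)"
proof -
  have "finite (chimera_E0 r \<union> chimera_E1 r)" "finite (chimera_E01 r)"
    using finite_chimera_E[of r] unfolding chimera_E_def by auto
  moreover have "(chimera_E0 r \<union> chimera_E1 r) \<inter> chimera_E01 r = {}"
    by (auto simp: chimera_E0_def chimera_E1_def chimera_E01_def)
  ultimately have "(\<Sum>e\<in>chimera_E r. \<bar>c e\<bar>) =
      (\<Sum>e\<in>chimera_E0 r \<union> chimera_E1 r. \<bar>c e\<bar>) + (\<Sum>e\<in>chimera_E01 r. \<bar>c e\<bar>)"
    unfolding chimera_E_def by (rule sum.union_disjoint)
  also have "(\<Sum>e\<in>chimera_E01 r. \<bar>c e\<bar>) =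
      (\<Sum>k\<in>{1..4}. \<Sum>e\<in>{e \<in> chimera_E01 r. cell_pos (fst e) = k}. \<bar>c e\<bar>)"
    using \<open>finite (chimera_E01 r)\<close>
    by (intro sum.group[symmetric]) (auto simp: chimera_E01_def cell_pos_def)
  finally show ?thesis .
qed

lemma ground_energy_le_eleventh:
  "ground_energy r c d \<le> - (1/11) * ((\<Sum>e\<in>chimera_E r. \<bar>c e\<bar>) + (\<Sum>u\<in>chimera_V r. \<bar>d u\<bar>))"
proof -
  let ?star = "\<lambda>k. \<Sum>e\<in>{e \<in> chimera_E01 r. cell_pos (fst e) = k}. \<bar>c e\<bar>"
  have "(\<Sum>k\<in>{1..4::nat}. ground_energy r c d) \<le> (\<Sum>k\<in>{1..4}. - ?star k)"
    by (intro sum_mono ground_energy_le_star_bound)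
  then have "4 * ground_energy r c d \<le> - (\<Sum>k\<in>{1..4}. ?star k)"
    by (simp add: sum_negf)
  then have "11 * ground_energy r c d \<le> - ((\<Sum>e\<in>chimera_E r. \<bar>c e\<bar>) + (\<Sum>u\<in>chimera_V r. \<bar>d u\<bar>))"
    using ground_energy_le_path_bound[of r c d] ground_energy_le_field_bound[of r c d]
      sum_abs_chimera_E_split[of c r]
    by linarith
  then show ?thesis
    by (simp add: field_simps)
qed

theorem theorem2:
  shows "\<exists>C::real. C > ln (1 + sqrt 2) / pi \<and> (3 * C + 4) / C < 17.26 \<and>
    (\<forall>(r::nat) (c :: vertex \<times> vertex \<Rightarrow> real) (d :: vertex \<Rightarrow> real). r \<ge> 1 \<longrightarrow>
       ground_energy r c d \<le> - (C / (3 * C + 4)) *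
         ((\<Sum>e\<in>chimera_E r. \<bar>c e\<bar>) + (\<Sum>u\<in>chimera_V r. \<bar>d u\<bar>)))"
proof (intro exI[of _ "1/2"] conjI allI impI)
  have "ln (1 + sqrt 2) \<le> sqrt 2"
    by (simp add: ln_add_one_self_le_self)
  also have "sqrt 2 < 3/2"
    by (rule real_less_lsqrt) (auto simp: power2_eq_square)
  finally show "ln (1 + sqrt 2) / pi < 1/2"
    using pi_gt3 by (simp add: field_simps)
  show "(3 * (1/2) + 4) / (1/2::real) < 17.26"
    by simp
  show "ground_energy r c d \<le> - ((1/2) / (3 * (1/2) + 4)) *
      ((\<Sum>e\<in>chimera_E r. \<bar>c e\<bar>) + (\<Sum>u\<in>chimera_V r. \<bar>d u\<bar>))" for r c d
    using ground_energy_le_eleventh[of r c d] by simp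
qed

end
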